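(* Let $N\in\mathbb N$, $\alpha,\beta>-1$, let $x_0<\dots<x_N$ be the JGL nodes with Lagrange basis $h_0,\dots,h_N$, and let $\mu\in(k-1,k)$ with $k\in\mathbb N$. Then $$ {}^R\hat{\mathbf D}^{(\mu)}=\breve{\mathbf D}^{(k)}\,\hat{\mathbf I}^{(k-\mu)}, $$ where $\breve{\mathbf D}^{(k)}_{ij}=(1+x)^\mu D^k\{(1+x)^{k-\mu}h_j(x)\}\big|_{x=x_i}$ for $0\le i,j\le N$. In particular, for $k=1$, $\breve{\mathbf D}^{(1)}=(1-\mu)\mathbf I_{N+1}+\operatorname{diag}(1+x_0,\dots,1+x_N)\,\mathbf D$, where $\mathbf D_{ij}=h_j'(x_i)$.
   Context: For $\rho>0$, $(I_-^\rho u)(x)=\frac{1}{\Gamma(\rho)}\int_{-1}^x (x-y)^{\rho-1}u(y)\,dy$, $D^k=d^k/dx^k$; for $\mu\in(k-1,k)$ the Riemann–Liouville derivative is ${}^R D_-^\mu u=D^k(I_-^{k-\mu}u)$. Modified operators: $\hat I_-^\mu u=(1+x)^{-\mu}I_-^\mu u$ and ${}^R\hat D_-^\mu u=(1+x)^{\mu}\,{}^R D_-^\mu u$; applied to polynomials these give polynomials, whose values at $x=-1$ are taken. The JGL nodes $x_0<\dots<x_N$ are the zeros of $(1-x^2)\frac{d}{dx}P_N^{(\alpha,\beta)}$ (Jacobi polynomial, Szegő normalization), and $h_j\in\mathcal P_N$ satisfies $h_j(x_i)=\delta_{ij}$. The matrices are ${}^R\hat{\mathbf D}^{(\mu)}_{ij}=({}^R\hat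 D_-^\mu h_j)(x_i)$ and $\hat{\mathbf I}^{(\nu)}_{ij}=(\hat I_-^\nu h_j)(x_i)$, $0\le i,j\le N$. *)

theory Defs
  imports "HOL-Analysis.Analysis" "HOL-Computational_Algebra.Polynomial"
begin

text \<open>Jacobi polynomial in Szego normalization:
  P_n^(a,b)(x) = sum_{m=0}^n C(n+a, n-m) C(n+b, m) ((x-1)/2)^m ((x+1)/2)^(n-m).\<close>
definition jacobi_poly :: "nat \<Rightarrow> real \<Rightarrow> real \<Rightarrow> real poly" where
  "jacobi_poly n a b =
     (\<Sum>m\<le>n. smult (((real n + a) gchoose (n - m)) * ((real n + b) gchoose m))
                 ([:-1/2, 1/2:] ^ m * [:1/2, 1/2:] ^ (n - m)))"

definition JGL_nodes :: "nat \<Rightarrow> real \<Rightarrow> real \<Rightarrow> real set" where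
  "JGL_nodes N a b = {t. poly ([:1, 0, -1:] * pderiv (jacobi_poly N a b)) t = 0}"

definition RL_int :: "real \<Rightarrow> (real \<Rightarrow> real) \<Rightarrow> real \<Rightarrow> real" where
  "RL_int \<rho> u x = integral {-1..x} (\<lambda>y. (x - y) powr (\<rho> - 1) * u y) / Gamma \<rho>"

definition RL_deriv :: "real \<Rightarrow> (real \<Rightarrow> real) \<Rightarrow> real \<Rightarrow> real" where
  "RL_deriv \<mu> u = (deriv ^^ nat \<lceil>\<mu>\<rceil>) (RL_int (real (nat \<lceil>\<mu>\<rceil>) - \<mu>) u)"

definition ext_left :: "(real \<Rightarrow> real) \<Rightarrow> real \<Rightarrow> real" where
  "ext_left f x = (if x = -1 then Lim (at_right (-1)) f else f x)"

definition hat_RL_int :: "real \<Rightarrow> (real \<Rightarrow> real) \<Rightarrow> real \<Rightarrow> real" where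
  "hat_RL_int \<rho> u = ext_left (\<lambda>x. (1 + x) powr (- \<rho>) * RL_int \<rho> u x)"

definition hat_RL_deriv :: "real \<Rightarrow> (real \<Rightarrow> real) \<Rightarrow> real \<Rightarrow> real" where
  "hat_RL_deriv \<mu> u = ext_left (\<lambda>x. (1 + x) powr \<mu> * RL_deriv \<mu> u x)"

definition hatD_mat :: "real \<Rightarrow> (nat \<Rightarrow> real) \<Rightarrow> (nat \<Rightarrow> real poly) \<Rightarrow> nat \<Rightarrow> nat \<Rightarrow> real" where
  "hatD_mat \<mu> x h i j = hat_RL_deriv \<mu> (poly (h j)) (x i)"

definition hatI_mat :: "real \<Rightarrow> (nat \<Rightarrow> real) \<Rightarrow> (nat \<Rightarrow> real poly) \<Rightarrow> nat \<Rightarrow> nat \<Rightarrow> real" where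
  "hatI_mat \<nu> x h i j = hat_RL_int \<nu> (poly (h j)) (x i)"

definition brevD_mat :: "nat \<Rightarrow> real \<Rightarrow> (nat \<Rightarrow> real) \<Rightarrow> (nat \<Rightarrow> real poly) \<Rightarrow> nat \<Rightarrow> nat \<Rightarrow> real" where
  "brevD_mat k \<mu> x h i j =
     ext_left (\<lambda>t. (1 + t) powr \<mu> *
                 (deriv ^^ k) (\<lambda>s. (1 + s) powr (real k - \<mu>) * poly (h j) s) t) (x i)"

end

theory Submission imports Defs begin

text \<open>For \<open>x > -1\<close> the Riemann-Liouville integral \<open>I\<^sup>\<nu> p\<close> of a polynomial \<open>p\<close> is \<open>(1 + x) powr \<nu>\<close>
  times a polynomial \<open>q\<close> with \<open>deg q \<le> deg p\<close> (each power of \<open>1 + y\<close> contributes a Beta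
  integral), and \<open>D\<^sup>k ((1 + x) powr a * r)\<close> is \<open>(1 + x) powr (a - k)\<close> times a polynomial depending
  linearly on \<open>r\<close>. With \<open>\<nu> = k - \<mu>\<close> both hatted operators therefore act on polynomials, their values
  at \<open>x = -1\<close> being the continuous extensions, and \<open>\<^sup>R\<hat>D\<^sup>\<mu> h\<^sub>j\<close> is the weighted \<open>k\<close>-th
  derivative of the polynomial \<open>q\<close> belonging to \<open>h\<^sub>j\<close>. Expanding \<open>q\<close> in the Lagrange basis gives
  the matrix product. This needs the nodes in \<open>[-1, \<infinity>)\<close>: left of \<open>-1\<close> every term of the derivative of
  the Jacobi polynomial has the same strict sign.\<close>

lemma gbinomial_pos:
  fixes r :: real
  assumes "r > real k - 1"
  shows "r gchoose k > 0"
proof -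
  have "(\<Prod>i = 0..<k. r - of_nat i) > 0"
    using assms by (intro prod_pos) auto
  then show ?thesis
    by (metis gbinomial_mult_fact' fact_gt_zero zero_less_mult_pos2)
qed

lemma pderiv_sum: "pderiv (sum f A) = (\<Sum>a\<in>A. pderiv (f a))"
  by (induction A rule: infinite_finite_induct) (simp_all add: pderiv_add)

lemma poly_pderiv_binomial_sum_pos:
  fixes c :: "nat \<Rightarrow> real"
  assumes n: "n \<ge> 1" and c: "\<And>m. m \<le> n \<Longrightarrow> c m \<ge> 0" "c n > 0" and s: "s > 0"
  shows "poly (pderiv (\<Sum>m\<le>n. smult (c m) ([:1, 1:] ^ m * [:0, 1:] ^ (n - m)))) s > 0"
proof -
  define f where
    "f m = c m * (real m * (1 + s) ^ (m - 1) * s ^ (n - m) + real (n - m) * (1 + s) ^ m * s ^ (n - m - 1))"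
    for m
  have "poly (pderiv (\<Sum>m\<le>n. smult (c m) ([:1, 1:] ^ m * [:0, 1:] ^ (n - m)))) s = (\<Sum>m\<le>n. f m)"
    unfolding f_def
    by (simp add: pderiv_sum pderiv_smult pderiv_mult pderiv_power poly_sum pderiv_pCons algebra_simps)
  also have "(\<Sum>m\<le>n. f m) > 0"
  proof (rule sum_pos2)
    show "0 < f n" using n s c(2) by (simp add: f_def)
    show "0 \<le> f m" if "m \<in> {..n}" for m
      using that s c(1) by (simp add: f_def)
  qed auto
  finally show ?thesis .
qed

text \<open>The substitution \<open>s = -(1 + t) / 2\<close> turns both factors \<open>(t \<mp> 1) / 2\<close> negative into \<open>-(1 + s)\<close>
  and \<open>-s\<close>.\<close>
lemma poly_jacobi_poly_reflect:
  "poly (jacobi_poly n a b) t = (-1) ^ n *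
     poly (\<Sum>m\<le>n. smult (((real n + a) gchoose (n - m)) * ((real n + b) gchoose m))
                      ([:1, 1:] ^ m * [:0, 1:] ^ (n - m))) (- (1 + t) / 2)"
  unfolding jacobi_poly_def poly_sum sum_distrib_left
proof (rule sum.cong)
  fix m assume "m \<in> {..n}"
  then have "(-1::real) ^ n = (-1) ^ m * (-1) ^ (n - m)" by (simp flip: power_add)
  then show "poly (smult (((real n + a) gchoose (n - m)) * ((real n + b) gchoose m))
                ([:-1/2, 1/2:] ^ m * [:1/2, 1/2:] ^ (n - m))) t =
     (-1) ^ n * poly (smult (((real n + a) gchoose (n - m)) * ((real n + b) gchoose m))
                ([:1, 1:] ^ m * [:0, 1:] ^ (n - m))) (- (1 + t) / 2)"
    by (simp add: power_minus[symmetric] field_simps)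
qed simp

lemma pderiv_jacobi_poly_nonzero:
  assumes n: "n \<ge> 1" and a: "a > -1" and b: "b > -1" and t: "t < -1"
  shows "poly (pderiv (jacobi_poly n a b)) t \<noteq> 0"
proof -
  define g where "g = (\<Sum>m\<le>n. smult (((real n + a) gchoose (n - m)) * ((real n + b) gchoose m))
                                  ([:1, 1:] ^ m * [:0, 1:] ^ (n - m)))"
  have "poly (jacobi_poly n a b) = (\<lambda>t. (-1) ^ n * poly g (- (1 + t) / 2))"
    by (rule ext) (simp add: poly_jacobi_poly_reflect g_def)
  moreover have "((\<lambda>t. (-1) ^ n * poly g (- (1 + t) / 2)) has_real_derivative
          (-1) ^ n * (poly (pderiv g) (- (1 + t) / 2) * (- 1 / 2))) (at t)"
    by (auto intro!: derivative_eq_intros DERIV_chain2[OF poly_DERIV])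
  ultimately have "poly (pderiv (jacobi_poly n a b)) t = (-1) ^ n * (poly (pderiv g) (- (1 + t) / 2) * (- 1 / 2))"
    using DERIV_unique[OF poly_DERIV[of "jacobi_poly n a b" t]] by simp
  moreover have "poly (pderiv g) (- (1 + t) / 2) > 0"
  proof -
    have c: "((real n + a) gchoose (n - m)) * ((real n + b) gchoose m) > 0" if "m \<le> n" for m
      using that a b by (intro mult_pos_pos gbinomial_pos) auto
    show ?thesis
      unfolding g_def using t by (intro poly_pderiv_binomial_sum_pos[OF n less_imp_le[OF c] c]) auto
  qed
  ultimately show ?thesis by simp
qed

lemma JGL_nodes_ge:
  assumes "n \<ge> 1" "a > -1" "b > -1" "t \<in> JGL_nodes n a b"
  shows "t \<ge> -1"
proof (rule ccontr)
  assume "\<not> t \<ge> -1"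
  then have t: "t < -1" by simp
  then have "(-t) * (-t) > 1 * 1" by (intro mult_strict_mono) auto
  then have "poly [:1, 0, -1:] t \<noteq> 0" by simp
  with pderiv_jacobi_poly_nonzero[OF assms(1-3) t] assms(4) show False
    by (simp add: JGL_nodes_def)
qed

lemma has_integral_RL_kernel_power:
  fixes \<nu> x :: real
  assumes \<nu>: "\<nu> > 0" and x: "x > -1"
  shows "((\<lambda>y. (x - y) powr (\<nu> - 1) * (1 + y) ^ m) has_integral
            (1 + x) powr \<nu> * (1 + x) ^ m * Beta (real m + 1) \<nu>) {-1..x}"
proof -
  define L where "L = 1 + x"
  have L: "L > 0" using x by (simp add: L_def)
  have "((\<lambda>t. t powr (real m + 1 - 1) * (1 - t) powr (\<nu> - 1)) has_integral Beta (real m + 1) \<nu>) {0..1}"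
    by (rule has_integral_Beta_real) (use \<nu> in auto)
  then have "((\<lambda>t. t ^ m * (1 - t) powr (\<nu> - 1)) has_integral Beta (real m + 1) \<nu>) (cbox 0 1)"
    unfolding cbox_interval by (subst has_integral_spike_finite_eq[of "{0}"]) (auto simp: powr_realpow)
  from has_integral_affinity'[OF this, of "1/L" "1/L"]
  have "((\<lambda>y. ((1/L) *\<^sub>R y + 1/L) ^ m * (1 - ((1/L) *\<^sub>R y + 1/L)) powr (\<nu> - 1)) has_integral
          Beta (real m + 1) \<nu> /\<^sub>R (1/L) ^ DIM(real))
          (cbox ((0 - 1/L) /\<^sub>R (1/L)) ((1 - 1/L) /\<^sub>R (1/L)))"
    using L by simp
  moreover have "cbox ((0 - 1/L) /\<^sub>R (1/L)) ((1 - 1/L) /\<^sub>R (1/L)) = {-1..x}"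
    using L by (simp add: cbox_interval L_def field_simps)
  moreover have "(1/L) *\<^sub>R y + 1/L = (1 + y) / L" "1 - (1 + y) / L = (x - y) / L" for y
    using L by (simp_all add: L_def field_simps)
  moreover have "Beta (real m + 1) \<nu> /\<^sub>R (1/L) ^ DIM(real) = L * Beta (real m + 1) \<nu>"
    by simp
  ultimately have "((\<lambda>y. ((1 + y) / L) ^ m * ((x - y) / L) powr (\<nu> - 1)) has_integral
          L * Beta (real m + 1) \<nu>) {-1..x}"
    by (simp only:)
  from has_integral_mult_right[OF this, of "L ^ m * L powr (\<nu> - 1)"]
  show ?thesis
    using L by (simp add: powr_divide power_divide powr_diff L_def[symmetric] field_simps)
qed

text \<open>Expanding \<open>p\<close> in powers of \<open>1 + y\<close>, \<open>RL_int \<nu> (poly p) x\<close> is \<open>(1 + x) powr \<nu>\<close> times this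
  polynomial.\<close>
definition RL_int_pcoeff :: "real \<Rightarrow> real poly \<Rightarrow> real poly" where
  "RL_int_pcoeff \<nu> p = (\<Sum>i\<le>degree p.
     smult (coeff (p \<circ>\<^sub>p [:-1, 1:]) i * Beta (real i + 1) \<nu> / Gamma \<nu>) ([:1, 1:] ^ i))"

lemma degree_RL_int_pcoeff: "degree (RL_int_pcoeff \<nu> p) \<le> degree p"
  unfolding RL_int_pcoeff_def
  by (rule degree_sum_le) (auto intro: order.trans[OF degree_smult_le] simp: degree_linear_power)

lemma poly_eq_sum_shifted_powers:
  "poly p (y::real) = (\<Sum>i\<le>degree p. coeff (p \<circ>\<^sub>p [:-1, 1:]) i * (1 + y) ^ i)"
proof -
  have "poly p y = poly (p \<circ>\<^sub>p [:-1, 1:]) (1 + y)" by (simp add: poly_pcompose)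
  also have "\<dots> = (\<Sum>i\<le>degree (p \<circ>\<^sub>p [:-1, 1:]). coeff (p \<circ>\<^sub>p [:-1, 1:]) i * (1 + y) ^ i)"
    by (rule poly_altdef)
  finally show ?thesis by (simp add: degree_pcompose)
qed

lemma RL_int_poly:
  assumes \<nu>: "\<nu> > 0" and x: "x > -1"
  shows "RL_int \<nu> (poly p) x = (1 + x) powr \<nu> * poly (RL_int_pcoeff \<nu> p) x"
proof -
  define a where "a i = coeff (p \<circ>\<^sub>p [:-1, 1:]) i" for i
  have "((\<lambda>y. \<Sum>i\<le>degree p. a i * ((x - y) powr (\<nu> - 1) * (1 + y) ^ i)) has_integral
        (\<Sum>i\<le>degree p. a i * ((1 + x) powr \<nu> * (1 + x) ^ i * Beta (real i + 1) \<nu>))) {-1..x}"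
    by (intro has_integral_sum has_integral_mult_right has_integral_RL_kernel_power \<nu> x) auto
  moreover have "(\<lambda>y. \<Sum>i\<le>degree p. a i * ((x - y) powr (\<nu> - 1) * (1 + y) ^ i))
      = (\<lambda>y. (x - y) powr (\<nu> - 1) * poly p y)"
    by (simp add: poly_eq_sum_shifted_powers[of p] a_def sum_distrib_left algebra_simps)
  ultimately show ?thesis
    unfolding RL_int_def RL_int_pcoeff_def a_def
    by (simp add: integral_unique poly_sum sum_divide_distrib sum_distrib_left algebra_simps)
qed

text \<open>\<open>weighted_pderiv a p = (1 + x) powr (1 - a) * D ((1 + x) powr a * p)\<close>, and its iterate
  \<open>weighted_higher_pderiv a k p = (1 + x) powr (k - a) * D\<^sup>k ((1 + x) powr a * p)\<close>.\<close>
definition weighted_pderiv :: "real \<Rightarrow> real poly \<Rightarrow> real poly" where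
  "weighted_pderiv a p = smult a p + [:1, 1:] * pderiv p"

fun weighted_higher_pderiv :: "real \<Rightarrow> nat \<Rightarrow> real poly \<Rightarrow> real poly" where
  "weighted_higher_pderiv a 0 p = p"
| "weighted_higher_pderiv a (Suc k) p = weighted_pderiv (a - real k) (weighted_higher_pderiv a k p)"

lemma weighted_higher_pderiv_add:
  "weighted_higher_pderiv a k (p + q) = weighted_higher_pderiv a k p + weighted_higher_pderiv a k q"
  by (induction k) (simp_all add: weighted_pderiv_def pderiv_add algebra_simps smult_add_right)

lemma weighted_higher_pderiv_smult:
  "weighted_higher_pderiv a k (smult c p) = smult c (weighted_higher_pderiv a k p)"
  by (induction k) (simp_all add: weighted_pderiv_def pderiv_smult smult_add_right ac_simps)

lemma weighted_higher_pderiv_0 [simp]: "weighted_higher_pderiv a k 0 = 0"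
  by (induction k) (simp_all add: weighted_pderiv_def)

lemma weighted_higher_pderiv_sum:
  "weighted_higher_pderiv a k (\<Sum>l\<in>A. f l) = (\<Sum>l\<in>A. weighted_higher_pderiv a k (f l))"
  by (induction A rule: infinite_finite_induct) (simp_all add: weighted_higher_pderiv_add)

lemma has_real_derivative_powr_mult_poly:
  assumes "s > -1"
  shows "((\<lambda>s. (1 + s) powr a * poly p s) has_real_derivative
            (1 + s) powr (a - 1) * poly (weighted_pderiv a p) s) (at s)"
proof -
  have "((\<lambda>s. (1 + s) powr a * poly p s) has_real_derivative
         a * (1 + s) powr (a - 1) * poly p s + (1 + s) powr a * poly (pderiv p) s) (at s)"
    using assms by (auto intro!: derivative_eq_intros poly_DERIV)
  moreover have "(1 + s) powr a = (1 + s) powr (a - 1) * (1 + s)"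
    using assms by (simp add: powr_diff)
  ultimately show ?thesis
    by (simp add: weighted_pderiv_def algebra_simps)
qed

lemma higher_deriv_powr_mult_poly:
  assumes "s > -1"
  shows "(deriv ^^ k) (\<lambda>s. (1 + s) powr a * poly p s) s
           = (1 + s) powr (a - real k) * poly (weighted_higher_pderiv a k p) s"
  using assms
proof (induction k arbitrary: s)
  case (Suc k)
  have "\<forall>\<^sub>F y in nhds s. y \<in> {-1<..}"
    by (rule eventually_nhds_in_open) (use Suc.prems in auto)
  then have "\<forall>\<^sub>F y in nhds s. (deriv ^^ k) (\<lambda>s. (1 + s) powr a * poly p s) y =
               (1 + y) powr (a - real k) * poly (weighted_higher_pderiv a k p) y"
    by eventually_elim (use Suc.IH in auto)
  then have "(deriv ^^ Suc k) (\<lambda>s. (1 + s) powr a * poly p s) s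
      = deriv (\<lambda>y. (1 + y) powr (a - real k) * poly (weighted_higher_pderiv a k p) y) s"
    by (simp add: deriv_cong_ev)
  also have "\<dots> = (1 + s) powr (a - real k - 1) * poly (weighted_higher_pderiv a (Suc k) p) s"
    by (simp add: DERIV_imp_deriv has_real_derivative_powr_mult_poly Suc.prems)
  finally show ?case by (simp add: algebra_simps)
qed simp

lemma ext_left_eq_poly:
  fixes f :: "real \<Rightarrow> real"
  assumes "\<And>y. y > -1 \<Longrightarrow> f y = poly q y" and "t \<ge> -1"
  shows "ext_left f t = poly q t"
proof (cases "t = -1")
  case True
  have "(poly q \<longlongrightarrow> poly q (-1)) (at_right (-1))"
    using poly_isCont[where x="-1" and p=q] unfolding isCont_def by (rule tendsto_mono[OF at_le, rotated]) simp
  moreover have "\<forall>\<^sub>F y in at_right (-1). poly q y = f y"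
    using eventually_at_right_less[of "-1::real"] by eventually_elim (simp add: assms(1))
  ultimately have "(f \<longlongrightarrow> poly q (-1)) (at_right (-1))"
    by (rule Lim_transform_eventually)
  then show ?thesis
    using True by (simp add: ext_left_def tendsto_Lim[OF trivial_limit_at_right_real])
qed (use assms in \<open>simp add: ext_left_def\<close>)

lemma hat_RL_int_poly:
  assumes "\<nu> > 0" "t \<ge> -1"
  shows "hat_RL_int \<nu> (poly p) t = poly (RL_int_pcoeff \<nu> p) t"
  unfolding hat_RL_int_def
proof (rule ext_left_eq_poly[OF _ assms(2)])
  fix y :: real assume "y > -1"
  then show "(1 + y) powr - \<nu> * RL_int \<nu> (poly p) y = poly (RL_int_pcoeff \<nu> p) y"
    using assms(1) by (simp add: RL_int_poly powr_minus field_simps)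
qed

lemma hat_RL_deriv_poly:
  assumes \<mu>: "real k - 1 < \<mu>" "\<mu> < real k" and t: "t \<ge> -1"
  shows "hat_RL_deriv \<mu> (poly p) t
           = poly (weighted_higher_pderiv (real k - \<mu>) k (RL_int_pcoeff (real k - \<mu>) p)) t"
  unfolding hat_RL_deriv_def
proof (rule ext_left_eq_poly[OF _ t])
  fix y :: real assume y: "y > -1"
  define \<nu> where "\<nu> = real k - \<mu>"
  have \<nu>: "\<nu> > 0" using \<mu> by (simp add: \<nu>_def)
  have k: "nat \<lceil>\<mu>\<rceil> = k"
    using \<mu> by (simp add: ceiling_eq_iff nat_eq_iff)
  have "\<forall>\<^sub>F s in nhds y. s \<in> {-1<..}"
    by (rule eventually_nhds_in_open) (use y in auto)
  then have "\<forall>\<^sub>F s in nhds y. RL_int \<nu> (poly p) s = (1 + s) powr \<nu> * poly (RL_int_pcoeff \<nu> p) s"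
    by eventually_elim (simp add: RL_int_poly \<nu>)
  then have "RL_deriv \<mu> (poly p) y = (deriv ^^ k) (\<lambda>s. (1 + s) powr \<nu> * poly (RL_int_pcoeff \<nu> p) s) y"
    unfolding RL_deriv_def k \<nu>_def by (rule higher_deriv_cong_ev) simp
  also have "\<dots> = (1 + y) powr (- \<mu>) * poly (weighted_higher_pderiv \<nu> k (RL_int_pcoeff \<nu> p)) y"
    by (simp add: higher_deriv_powr_mult_poly y \<nu>_def)
  finally show "(1 + y) powr \<mu> * RL_deriv \<mu> (poly p) y = poly (weighted_higher_pderiv \<nu> k (RL_int_pcoeff \<nu> p)) y"
    using y by (simp add: powr_minus)
qed

lemma brevD_mat_eq:
  assumes "x i \<ge> -1"
  shows "brevD_mat k \<mu> x h i l = poly (weighted_higher_pderiv (real k - \<mu>) k (h l)) (x i)"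
  unfolding brevD_mat_def
proof (rule ext_left_eq_poly[OF _ assms])
  fix y :: real assume "y > -1"
  then show "(1 + y) powr \<mu> * (deriv ^^ k) (\<lambda>s. (1 + s) powr (real k - \<mu>) * poly (h l) s) y
      = poly (weighted_higher_pderiv (real k - \<mu>) k (h l)) y"
    by (simp add: higher_deriv_powr_mult_poly powr_minus)
qed

lemma lagrange_interpolation:
  fixes x :: "nat \<Rightarrow> real"
  assumes inj: "inj_on x {0..N}" and deg: "degree p \<le> N"
    and deg_h: "\<And>j. j \<le> N \<Longrightarrow> degree (h j) \<le> N"
    and h_x: "\<And>i j. i \<le> N \<Longrightarrow> j \<le> N \<Longrightarrow> poly (h j) (x i) = (if i = j then 1 else 0)"
  shows "p = (\<Sum>l\<le>N. smult (poly p (x l)) (h l))"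
proof (rule poly_eqI_degree[of "x ` {0..N}"])
  show "poly p t = poly (\<Sum>l\<le>N. smult (poly p (x l)) (h l)) t" if "t \<in> x ` {0..N}" for t
  proof -
    obtain i where i: "i \<le> N" "t = x i" using \<open>t \<in> x ` {0..N}\<close> by auto
    then have "(\<Sum>l\<le>N. poly p (x l) * poly (h l) (x i)) = (\<Sum>l\<le>N. if l = i then poly p (x l) else 0)"
      by (intro sum.cong) (simp_all add: h_x)
    then show ?thesis using i by (simp add: poly_sum)
  qed
  have "card (x ` {0..N}) = N + 1" using inj by (simp add: card_image)
  moreover have "degree (\<Sum>l\<le>N. smult (poly p (x l)) (h l)) \<le> N"
    by (rule degree_sum_le) (auto intro: order.trans[OF degree_smult_le] deg_h)
  ultimately show "degree p < card (x ` {0..N})" "degree (\<Sum>l\<le>N. smult (poly p (x l)) (h l)) < card (x ` {0..N})"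
    using deg by auto
qed

lemma hatD_mat_factorization:
  fixes x :: "nat \<Rightarrow> real"
  assumes nodes: "\<And>i. i \<le> N \<Longrightarrow> x i \<ge> -1" and inj: "inj_on x {0..N}"
    and deg_h: "\<And>j. j \<le> N \<Longrightarrow> degree (h j) \<le> N"
    and h_x: "\<And>i j. i \<le> N \<Longrightarrow> j \<le> N \<Longrightarrow> poly (h j) (x i) = (if i = j then 1 else 0)"
    and \<mu>: "real k - 1 < \<mu>" "\<mu> < real k"
    and ij: "i \<le> N" "j \<le> N"
  shows "hatD_mat \<mu> x h i j = (\<Sum>l\<le>N. brevD_mat k \<mu> x h i l * hatI_mat (real k - \<mu>) x h l j)"
proof -
  define \<nu> where "\<nu> = real k - \<mu>"
  have \<nu>: "\<nu> > 0" using \<mu> by (simp add: \<nu>_def)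
  define q where "q = RL_int_pcoeff \<nu> (h j)"
  have q_exp: "q = (\<Sum>l\<le>N. smult (poly q (x l)) (h l))"
    using degree_RL_int_pcoeff[of \<nu> "h j"] deg_h[OF ij(2)]
    by (intro lagrange_interpolation[OF inj _ deg_h h_x]) (simp_all add: q_def)
  have "hatD_mat \<mu> x h i j = poly (weighted_higher_pderiv \<nu> k q) (x i)"
    unfolding hatD_mat_def hat_RL_deriv_poly[OF \<mu> nodes[OF ij(1)]] q_def \<nu>_def ..
  also have "\<dots> = poly (\<Sum>l\<le>N. smult (poly q (x l)) (weighted_higher_pderiv \<nu> k (h l))) (x i)"
    by (subst (1) q_exp) (simp add: weighted_higher_pderiv_sum weighted_higher_pderiv_smult)
  also have "\<dots> = (\<Sum>l\<le>N. brevD_mat k \<mu> x h i l * hatI_mat \<nu> x h l j)"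
    unfolding poly_sum poly_smult
    by (intro sum.cong refl)
       (simp add: brevD_mat_eq nodes ij hatI_mat_def hat_RL_int_poly \<nu> q_def \<nu>_def[symmetric])
  finally show ?thesis by (simp add: \<nu>_def)
qed

lemma brevD_mat_first_order:
  assumes "x i \<ge> -1" and "poly (h j) (x i) = (if i = j then 1 else 0)"
  shows "brevD_mat 1 \<mu> x h i j = (1 - \<mu>) * (if i = j then 1 else 0) + (1 + x i) * deriv (poly (h j)) (x i)"
  using assms by (simp add: brevD_mat_eq weighted_pderiv_def poly_DERIV[THEN DERIV_imp_deriv] algebra_simps)

theorem theorem3p3:
  fixes N k :: nat and \<alpha> \<beta> \<mu> :: real
    and x :: "nat \<Rightarrow> real" and h :: "nat \<Rightarrow> real poly"
  assumes "N \<ge> 1" and "\<alpha> > -1" and "\<beta> > -1"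
    and "strict_mono_on {0..N} x"
    and "x ` {0..N} = JGL_nodes N \<alpha> \<beta>"
    and "\<And>j. j \<le> N \<Longrightarrow> degree (h j) \<le> N"
    and "\<And>i j. i \<le> N \<Longrightarrow> j \<le> N \<Longrightarrow> poly (h j) (x i) = (if i = j then 1 else 0)"
    and "k \<ge> 1" and "real k - 1 < \<mu>" and "\<mu> < real k"
  shows "(\<forall>i\<le>N. \<forall>j\<le>N.
            hatD_mat \<mu> x h i j = (\<Sum>l\<le>N. brevD_mat k \<mu> x h i l * hatI_mat (real k - \<mu>) x h l j))
       \<and> (k = 1 \<longrightarrow> (\<forall>i\<le>N. \<forall>j\<le>N.
            brevD_mat 1 \<mu> x h i j =
              (1 - \<mu>) * (if i = j then 1 else 0) + (1 + x i) * deriv (poly (h j)) (x i)))"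
proof -
  have nodes: "x i \<ge> -1" if "i \<le> N" for i
  proof (rule JGL_nodes_ge[OF assms(1-3)])
    show "x i \<in> JGL_nodes N \<alpha> \<beta>" using assms(5) that by auto
  qed
  have inj: "inj_on x {0..N}"
    using assms(4) by (rule strict_mono_on_imp_inj_on)
  have "brevD_mat 1 \<mu> x h i j = (1 - \<mu>) * (if i = j then 1 else 0) + (1 + x i) * deriv (poly (h j)) (x i)"
    if "i \<le> N" "j \<le> N" for i j
    using that by (intro brevD_mat_first_order nodes assms(7))
  then show ?thesis
    using hatD_mat_factorization[OF nodes inj assms(6,7,9,10)] by blast
qed

end
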